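(* For every positive integer $m$ and every nonempty proper subset $S\subseteq[n]$ there is a two-outcome projective measurement $\{\Pi_S,\overline{\Pi}_S\}$ on $2m$ copies of an $n$-qubit system with the following property. Let $C\subseteq[n]$ be nonempty proper and let $\ket{\psi}=\ket{a}_C\otimes\ket{b}_{\overline{C}}$, where $\ket{a}_C$ and $\ket{b}_{\overline{C}}$ are each $\epsilon$-far from every multipartite product state. If $\ket{\psi}^{\otimes 2m}$ is measured with $\{\Pi_S,\overline{\Pi}_S\}$, then the outcome $\Pi_S$ ("accept") occurs with probability $1$ if $S=C$ or $S=\overline{C}$, and with probability at most $\exp(-\epsilon^2 m/2)$ if $S\ne C,\overline{C}$.
   Context: A state on a set $Q$ of qubits is multipartite product if it equals $\ket{a'}_D\otimes\ket{b'}_{Q\setminus D}$ for some nonempty proper $D\subsetneq Q$; a pure state $\ket{\phi}$ is $\epsilon$-far from a set $\mathcal{P}$ if $|\langle\phi|\chi\rangle|^2\le1-\epsilon^2$ for all $\ket{\chi}\in\mathcal{P}$. $\overline{C}=[n]\setminus C$. *)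

theory Defs
  imports Complex_Main "HOL-Library.FuncSet"
begin

text \<open>Qubits are labelled by natural numbers; the n-qubit system uses labels [n] = {1..n}.
  A computational basis state of a set Q of qubits is an extensional assignment
  Q -> bool. A (pure) state vector on Q is a function from such assignments to complex
  amplitudes; only its values on the basis of Q are relevant.\<close>

definition qbasis :: "nat set \<Rightarrow> (nat \<Rightarrow> bool) set" where
  "qbasis Q = PiE Q (\<lambda>_. UNIV)"

definition qinner :: "nat set \<Rightarrow> ((nat \<Rightarrow> bool) \<Rightarrow> complex) \<Rightarrow> ((nat \<Rightarrow> bool) \<Rightarrow> complex) \<Rightarrow> complex" where
  "qinner Q u v = (\<Sum>x\<in>qbasis Q. cnj (u x) * v x)"

definition unit_state :: "nat set \<Rightarrow> ((nat \<Rightarrow> bool) \<Rightarrow> complex) \<Rightarrow> bool" where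
  "unit_state Q v \<longleftrightarrow> (\<Sum>x\<in>qbasis Q. (cmod (v x))\<^sup>2) = 1"

definition qtensor :: "nat set \<Rightarrow> nat set \<Rightarrow> ((nat \<Rightarrow> bool) \<Rightarrow> complex) \<Rightarrow> ((nat \<Rightarrow> bool) \<Rightarrow> complex) \<Rightarrow> ((nat \<Rightarrow> bool) \<Rightarrow> complex)" where
  "qtensor D E a b = (\<lambda>x. a (restrict x D) * b (restrict x E))"

definition mp_product :: "nat set \<Rightarrow> ((nat \<Rightarrow> bool) \<Rightarrow> complex) \<Rightarrow> bool" where
  "mp_product Q chi \<longleftrightarrow> unit_state Q chi \<and>
     (\<exists>D a' b'. D \<noteq> {} \<and> D \<subset> Q \<and> unit_state D a' \<and> unit_state (Q - D) b' \<and>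
        (\<forall>x\<in>qbasis Q. chi x = qtensor D (Q - D) a' b' x))"

definition far_from_mp :: "nat set \<Rightarrow> real \<Rightarrow> ((nat \<Rightarrow> bool) \<Rightarrow> complex) \<Rightarrow> bool" where
  "far_from_mp Q eps phi \<longleftrightarrow>
     (\<forall>chi. mp_product Q chi \<longrightarrow> (cmod (qinner Q phi chi))\<^sup>2 \<le> 1 - eps\<^sup>2)"

definition copies_basis :: "nat \<Rightarrow> nat set \<Rightarrow> (nat \<Rightarrow> nat \<Rightarrow> bool) set" where
  "copies_basis k Q = PiE {..<k} (\<lambda>_. qbasis Q)"

definition tensor_power :: "nat \<Rightarrow> ((nat \<Rightarrow> bool) \<Rightarrow> complex) \<Rightarrow> ((nat \<Rightarrow> nat \<Rightarrow> bool) \<Rightarrow> complex)" where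
  "tensor_power k psi = (\<lambda>X. \<Prod>i<k. psi (X i))"

text \<open>An operator on the k-copy space is a matrix indexed by the basis. The pair
  {Pi, I - Pi} is a two-outcome projective measurement iff Pi is an orthogonal projector.\<close>
definition projector :: "(nat \<Rightarrow> nat \<Rightarrow> bool) set \<Rightarrow> ((nat \<Rightarrow> nat \<Rightarrow> bool) \<Rightarrow> (nat \<Rightarrow> nat \<Rightarrow> bool) \<Rightarrow> complex) \<Rightarrow> bool" where
  "projector B P \<longleftrightarrow>
     (\<forall>x\<in>B. \<forall>y\<in>B. P x y = cnj (P y x)) \<and>
     (\<forall>x\<in>B. \<forall>z\<in>B. (\<Sum>y\<in>B. P x y * P y z) = P x z)"

definition outcome_prob :: "(nat \<Rightarrow> nat \<Rightarrow> bool) set \<Rightarrow> ((nat \<Rightarrow> nat \<Rightarrow> bool) \<Rightarrow> (nat \<Rightarrow> nat \<Rightarrow> bool) \<Rightarrow> complex) \<Rightarrow> ((nat \<Rightarrow> nat \<Rightarrow> bool) \<Rightarrow> complex) \<Rightarrow> real" where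
  "outcome_prob B P phi = Re (\<Sum>x\<in>B. \<Sum>y\<in>B. cnj (phi x) * P x y * phi y)"

end

theory Submission
  imports Defs "HOL-Analysis.Convex"
begin

(* The measurement is the swap test on the qubits in S, run on each of the m pairs of copies:
   its accepting projector is the product over the pairs of (1 + SWAP_S)/2, so a pure state psi
   is accepted with probability ((1 + tr rho_S^2)/2)^m, where rho_S is the reduced state of psi
   on S. For psi = a (x) b this purity is the product of the purities of a across the cut
   (C /\ S, C - S) and of b across the corresponding cut of the complement of C. A trivial cut
   has purity 1, so S = C and S = complement of C are accepted with certainty. Otherwise one of
   the two cuts is a proper bipartition; as the state is eps-far from product states across it,
   the largest eigenvalue of its reduced state, and hence its purity, is at most 1 - eps^2, and
   (1 + (1 - eps^2))/2 <= exp (- eps^2/2). *)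

section \<open>Purity bounds for complex matrices\<close>

lemma Cauchy_Schwarz_complex_sum:
  fixes f g :: "'a \<Rightarrow> complex"
  shows "(cmod (\<Sum>i\<in>I. f i * g i))\<^sup>2 \<le> (\<Sum>i\<in>I. (cmod (f i))\<^sup>2) * (\<Sum>i\<in>I. (cmod (g i))\<^sup>2)"
proof -
  have "cmod (\<Sum>i\<in>I. f i * g i) \<le> (\<Sum>i\<in>I. cmod (f i) * cmod (g i))"
    by (metis (no_types, lifting) norm_mult norm_sum sum.cong)
  then have "(cmod (\<Sum>i\<in>I. f i * g i))\<^sup>2 \<le> (\<Sum>i\<in>I. cmod (f i) * cmod (g i))\<^sup>2"
    by (simp add: power_mono)
  also have "\<dots> \<le> (\<Sum>i\<in>I. (cmod (f i))\<^sup>2) * (\<Sum>i\<in>I. (cmod (g i))\<^sup>2)"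
    by (rule Cauchy_Schwarz_ineq_sum)
  finally show ?thesis .
qed

lemma Cauchy_Schwarz_complex_double_sum:
  fixes f g :: "'a \<Rightarrow> 'b \<Rightarrow> complex"
  shows "(cmod (\<Sum>s\<in>I. \<Sum>r\<in>J. f s r * g s r))\<^sup>2
    \<le> (\<Sum>s\<in>I. \<Sum>r\<in>J. (cmod (f s r))\<^sup>2) * (\<Sum>s\<in>I. \<Sum>r\<in>J. (cmod (g s r))\<^sup>2)"
  using Cauchy_Schwarz_complex_sum[of "\<lambda>(s, r). f s r" "\<lambda>(s, r). g s r" "I \<times> J"]
  by (simp add: sum.cartesian_product split_def)

lemma cnj_mult_self: "cnj z * z = complex_of_real ((cmod z)\<^sup>2)"
  by (metis complex_norm_square mult.commute of_real_power)

lemma quartic_sum_eq_purity: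
  fixes A :: "'s \<Rightarrow> 'r \<Rightarrow> complex"
  shows "(\<Sum>s\<in>I. \<Sum>r\<in>J. \<Sum>s'\<in>I. \<Sum>r'\<in>J. cnj (A s r) * cnj (A s' r') * A s' r * A s r')
    = complex_of_real (\<Sum>s\<in>I. \<Sum>s'\<in>I. (cmod (\<Sum>r\<in>J. A s r * cnj (A s' r)))\<^sup>2)"
proof -
  define \<rho> where "\<rho> s s' = (\<Sum>r\<in>J. A s r * cnj (A s' r))" for s s'
  have "(\<Sum>s\<in>I. \<Sum>r\<in>J. \<Sum>s'\<in>I. \<Sum>r'\<in>J. cnj (A s r) * cnj (A s' r') * A s' r * A s r')
      = (\<Sum>s\<in>I. \<Sum>s'\<in>I. \<Sum>r\<in>J. \<Sum>r'\<in>J. cnj (A s r) * cnj (A s' r') * A s' r * A s r')"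
    by (intro sum.cong refl) (rule sum.swap)
  also have "\<dots> = (\<Sum>s\<in>I. \<Sum>s'\<in>I. \<rho> s' s * \<rho> s s')"
    unfolding \<rho>_def sum_product by (intro sum.cong refl) (simp add: ac_simps)
  also have "\<dots> = (\<Sum>s\<in>I. \<Sum>s'\<in>I. cnj (\<rho> s s') * \<rho> s s')"
    unfolding \<rho>_def by (simp add: mult.commute)
  also have "\<dots> = complex_of_real (\<Sum>s\<in>I. \<Sum>s'\<in>I. (cmod (\<rho> s s'))\<^sup>2)"
    by (simp add: cnj_mult_self)
  finally show ?thesis
    unfolding \<rho>_def .
qed

lemma adjoint_norm_bound:
  fixes A :: "'s \<Rightarrow> 'r \<Rightarrow> complex"
  assumes "0 \<le> c"
    and overlap: "\<And>u v. (cmod (\<Sum>s\<in>I. \<Sum>r\<in>J. cnj (A s r) * u s * v r))\<^sup>2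
                   \<le> c * (\<Sum>s\<in>I. (cmod (u s))\<^sup>2) * (\<Sum>r\<in>J. (cmod (v r))\<^sup>2)"
  shows "(\<Sum>r\<in>J. (cmod (\<Sum>s\<in>I. cnj (A s r) * u s))\<^sup>2) \<le> c * (\<Sum>s\<in>I. (cmod (u s))\<^sup>2)"
proof -
  define w where "w r = (\<Sum>s\<in>I. cnj (A s r) * u s)" for r
  define W where "W = (\<Sum>r\<in>J. (cmod (w r))\<^sup>2)"
  have "W \<ge> 0"
    unfolding W_def by (intro sum_nonneg) auto
  have "(\<Sum>s\<in>I. \<Sum>r\<in>J. cnj (A s r) * u s * cnj (w r)) = (\<Sum>r\<in>J. w r * cnj (w r))"
    unfolding w_def by (subst sum.swap) (simp add: sum_distrib_right)
  also have "\<dots> = complex_of_real W"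
    by (simp only: W_def of_real_sum complex_norm_square)
  finally have "(cmod (complex_of_real W))\<^sup>2 \<le> c * (\<Sum>s\<in>I. (cmod (u s))\<^sup>2) * W"
    using overlap[of u "\<lambda>r. cnj (w r)"] unfolding complex_mod_cnj W_def[symmetric] by simp
  then have "W * W \<le> c * (\<Sum>s\<in>I. (cmod (u s))\<^sup>2) * W"
    using \<open>W \<ge> 0\<close> by (simp add: power2_eq_square)
  then have "W \<le> c * (\<Sum>s\<in>I. (cmod (u s))\<^sup>2)"
    using \<open>W \<ge> 0\<close> \<open>0 \<le> c\<close>
    by (cases "W = 0") (auto simp: sum_nonneg mult_le_cancel_right)
  then show ?thesis
    unfolding W_def w_def .
qed

lemma overlap_bound_nonneg:
  fixes A :: "'s \<Rightarrow> 'r \<Rightarrow> complex"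
  assumes "finite I" "finite J"
    and overlap: "\<And>u v. (cmod (\<Sum>s\<in>I. \<Sum>r\<in>J. cnj (A s r) * u s * v r))\<^sup>2
                   \<le> c * (\<Sum>s\<in>I. (cmod (u s))\<^sup>2) * (\<Sum>r\<in>J. (cmod (v r))\<^sup>2)"
    and "I \<noteq> {}" "J \<noteq> {}"
  shows "0 \<le> c"
proof -
  have "0 \<le> c * real (card I) * real (card J)"
    using order_trans[OF zero_le_power2 overlap[of "\<lambda>_. 1" "\<lambda>_. 1"]] by simp
  then show ?thesis
    using assms by (simp add: zero_le_mult_iff card_gt_0_iff)
qed

(* With rho = A A^*, tr rho^2 is the inner product of A and rho A. The hypothesis bounds the
   operator norm of A^* by sqrt c, so Cauchy-Schwarz gives (tr rho^2)^2 <= c * tr rho^2. *)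
lemma purity_le_overlap_bound:
  fixes A :: "'s \<Rightarrow> 'r \<Rightarrow> complex"
  assumes "finite I" "finite J"
    and unit: "(\<Sum>s\<in>I. \<Sum>r\<in>J. (cmod (A s r))\<^sup>2) = 1"
    and overlap: "\<And>u v. (cmod (\<Sum>s\<in>I. \<Sum>r\<in>J. cnj (A s r) * u s * v r))\<^sup>2
                   \<le> c * (\<Sum>s\<in>I. (cmod (u s))\<^sup>2) * (\<Sum>r\<in>J. (cmod (v r))\<^sup>2)"
  shows "(\<Sum>s\<in>I. \<Sum>s'\<in>I. (cmod (\<Sum>r\<in>J. A s r * cnj (A s' r)))\<^sup>2) \<le> c"
proof -
  define \<rho> where "\<rho> s s' = (\<Sum>r\<in>J. A s r * cnj (A s' r))" for s s'
  define x where "x = (\<Sum>s\<in>I. \<Sum>s'\<in>I. (cmod (\<rho> s s'))\<^sup>2)"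
  have "x \<ge> 0"
    unfolding x_def by (intro sum_nonneg) auto
  have "0 \<le> c"
    using assms(1,2) overlap by (rule overlap_bound_nonneg) (use unit in auto)
  define B where "B r k = (\<Sum>s\<in>I. cnj (A s r) * \<rho> s k)" for r k
  have "(\<Sum>k\<in>I. \<Sum>r\<in>J. (cmod (B r k))\<^sup>2) \<le> (\<Sum>k\<in>I. c * (\<Sum>s\<in>I. (cmod (\<rho> s k))\<^sup>2))"
    unfolding B_def by (intro sum_mono adjoint_norm_bound[OF \<open>0 \<le> c\<close> overlap])
  also have "\<dots> = c * x"
    unfolding x_def sum_distrib_left by (subst sum.swap) simp
  finally have B_bound: "(\<Sum>k\<in>I. \<Sum>r\<in>J. (cmod (B r k))\<^sup>2) \<le> c * x" .
  have "(\<Sum>r\<in>J. B r k * A k r) = (\<Sum>s\<in>I. cnj (\<rho> s k) * \<rho> s k)" for k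
  proof -
    have "(\<Sum>r\<in>J. B r k * A k r) = (\<Sum>s\<in>I. \<Sum>r\<in>J. \<rho> s k * (A k r * cnj (A s r)))"
      unfolding B_def sum_distrib_right by (subst sum.swap) (simp add: ac_simps)
    also have "\<dots> = (\<Sum>s\<in>I. \<rho> s k * cnj (\<rho> s k))"
      unfolding \<rho>_def by (simp add: sum_distrib_left mult.commute)
    finally show ?thesis
      by (simp add: mult.commute)
  qed
  then have x_eq: "(\<Sum>k\<in>I. \<Sum>r\<in>J. B r k * A k r) = complex_of_real x"
    unfolding x_def by (subst sum.swap) (simp add: cnj_mult_self)
  have "x\<^sup>2 \<le> (\<Sum>k\<in>I. \<Sum>r\<in>J. (cmod (B r k))\<^sup>2) * 1"
    using Cauchy_Schwarz_complex_double_sum[where f = "\<lambda>k r. B r k" and g = A and I = I and J = J]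
    unfolding x_eq unit using \<open>x \<ge> 0\<close> by simp
  then have "x * x \<le> c * x"
    using B_bound by (simp add: power2_eq_square)
  then have "x \<le> c"
    using \<open>x \<ge> 0\<close> \<open>0 \<le> c\<close> by (cases "x = 0") (auto simp: mult_le_cancel_right)
  then show ?thesis
    unfolding x_def \<rho>_def .
qed

section \<open>Basis states and tensor products\<close>

lemma finite_qbasis: "finite Q \<Longrightarrow> finite (qbasis Q)"
  unfolding qbasis_def by (intro finite_PiE) auto

lemma qbasis_undefined: "x \<in> qbasis Q \<Longrightarrow> j \<notin> Q \<Longrightarrow> x j = undefined"
  unfolding qbasis_def by (rule PiE_arb)

lemma qbasisI: "(\<And>j. j \<notin> Q \<Longrightarrow> x j = undefined) \<Longrightarrow> x \<in> qbasis Q"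
  unfolding qbasis_def by (auto simp: PiE_def extensional_def)

lemma restrict_in_qbasis: "restrict x Q \<in> qbasis Q"
  by (rule qbasisI) auto

lemma restrict_qbasis: "x \<in> qbasis Q \<Longrightarrow> restrict x Q = x"
  unfolding qbasis_def by (rule PiE_restrict)

lemma override_on_in_qbasis:
  "u \<in> qbasis Q \<Longrightarrow> w \<in> qbasis Q \<Longrightarrow> override_on u w S \<in> qbasis Q"
  by (rule qbasisI) (simp add: override_on_def qbasis_undefined)

lemma restrict_override_on: "restrict (override_on u w S) C = override_on (restrict u C) (restrict w C) S"
  by (auto simp: override_on_def restrict_def)

lemma restrict_override_on_same: "restrict (override_on f g A) A = restrict g A"
  by (auto simp: restrict_def)

lemma restrict_override_on_disjoint: "A \<inter> B = {} \<Longrightarrow> restrict (override_on f g A) B = restrict f B"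
  by (auto simp: restrict_def override_on_def fun_eq_iff)

lemma sum_qbasis_split:
  assumes "D \<subseteq> C"
  shows "(\<Sum>x\<in>qbasis C. f x) = (\<Sum>s\<in>qbasis D. \<Sum>r\<in>qbasis (C - D). f (override_on r s D))"
proof -
  have "bij_betw (\<lambda>(s, r). override_on r s D) (qbasis D \<times> qbasis (C - D)) (qbasis C)"
    by (rule bij_betw_byWitness[where f' = "\<lambda>x. (restrict x D, restrict x (C - D))"])
      (use assms in \<open>auto simp: restrict_in_qbasis override_on_def fun_eq_iff qbasis_undefined
         intro!: qbasisI\<close>)
  then show ?thesis
    by (simp add: sum.reindex_bij_betw[symmetric] sum.cartesian_product split_def)
qed

lemma unit_state_split:
  assumes "D \<subseteq> C" "unit_state C a"
  shows "(\<Sum>s\<in>qbasis D. \<Sum>r\<in>qbasis (C - D). (cmod (a (override_on r s D)))\<^sup>2) = 1"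
  using assms(2) unfolding unit_state_def sum_qbasis_split[OF assms(1)] .

lemma unit_state_qtensor:
  assumes "D \<subseteq> C" "unit_state D a" "unit_state (C - D) b"
  shows "unit_state C (qtensor D (C - D) a b)"
proof -
  have "(\<Sum>x\<in>qbasis C. (cmod (qtensor D (C - D) a b x))\<^sup>2)
      = (\<Sum>s\<in>qbasis D. \<Sum>r\<in>qbasis (C - D). (cmod (a s))\<^sup>2 * (cmod (b r))\<^sup>2)"
    unfolding sum_qbasis_split[OF \<open>D \<subseteq> C\<close>] qtensor_def
    by (intro sum.cong refl) (auto simp: restrict_override_on_same restrict_override_on_disjoint
        restrict_qbasis norm_mult power_mult_distrib)
  also have "\<dots> = 1"
    using assms(2,3) unfolding unit_state_def by (simp add: sum_product[symmetric])
  finally show ?thesis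
    unfolding unit_state_def .
qed

lemma unit_state_normalize:
  assumes "0 < (\<Sum>x\<in>qbasis Q. (cmod (u x))\<^sup>2)"
  shows "unit_state Q (\<lambda>x. u x / complex_of_real (sqrt (\<Sum>x\<in>qbasis Q. (cmod (u x))\<^sup>2)))"
  using assms
  by (simp add: unit_state_def norm_divide power_divide sum_divide_distrib[symmetric])

section \<open>Purity of reduced states\<close>

(* The expectation of SWAP_S, which exchanges the qubits in S between two copies, in psi (x) psi. *)
definition swap_expectation :: "nat set \<Rightarrow> nat set \<Rightarrow> ((nat \<Rightarrow> bool) \<Rightarrow> complex) \<Rightarrow> complex" where
  "swap_expectation Q S \<psi> = (\<Sum>x\<in>qbasis Q. \<Sum>y\<in>qbasis Q.
     cnj (\<psi> x) * cnj (\<psi> y) * \<psi> (override_on x y S) * \<psi> (override_on y x S))"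

(* tr rho^2 for the reduced density matrix rho of a on D, a subsystem of C. *)
definition purity :: "nat set \<Rightarrow> nat set \<Rightarrow> ((nat \<Rightarrow> bool) \<Rightarrow> complex) \<Rightarrow> real" where
  "purity C D a = (\<Sum>s\<in>qbasis D. \<Sum>s'\<in>qbasis D.
     (cmod (\<Sum>r\<in>qbasis (C - D). a (override_on r s D) * cnj (a (override_on r s' D))))\<^sup>2)"

lemma purity_nonneg: "0 \<le> purity C D a"
  unfolding purity_def by (intro sum_nonneg) auto

lemma swap_expectation_eq_purity: "swap_expectation C S a = complex_of_real (purity C (C \<inter> S) a)"
proof -
  let ?D = "C \<inter> S"
  have "?D \<subseteq> C"
    by blast
  have swap: "override_on (override_on r s ?D) (override_on r' s' ?D) S = override_on r s' ?D"
    if "r \<in> qbasis (C - ?D)" "r' \<in> qbasis (C - ?D)" for r r' s s'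
    using that by (auto simp: override_on_def fun_eq_iff qbasis_undefined)
  have "swap_expectation C S a
      = (\<Sum>s\<in>qbasis ?D. \<Sum>r\<in>qbasis (C - ?D). \<Sum>s'\<in>qbasis ?D. \<Sum>r'\<in>qbasis (C - ?D).
           cnj (a (override_on r s ?D)) * cnj (a (override_on r' s' ?D))
           * a (override_on r s' ?D) * a (override_on r' s ?D))"
    unfolding swap_expectation_def sum_qbasis_split[OF \<open>?D \<subseteq> C\<close>] by (intro sum.cong refl) (simp add: swap)
  also have "\<dots> = complex_of_real (purity C ?D a)"
    unfolding purity_def by (rule quartic_sum_eq_purity)
  finally show ?thesis .
qed

lemma purity_trivial_cut:
  assumes "unit_state C a" and "C \<inter> S = {} \<or> C \<subseteq> S"
  shows "purity C (C \<inter> S) a = 1"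
proof -
  have "override_on x y S = (if C \<inter> S = {} then x else y)" if "x \<in> qbasis C" "y \<in> qbasis C" for x y
  proof
    fix j
    show "override_on x y S j = (if C \<inter> S = {} then x else y) j"
      using assms(2) qbasis_undefined[OF that(1), of j] qbasis_undefined[OF that(2), of j]
      by (cases "j \<in> C") (auto simp: override_on_def)
  qed
  then have "swap_expectation C S a = (\<Sum>x\<in>qbasis C. \<Sum>y\<in>qbasis C. (cnj (a x) * a x) * (cnj (a y) * a y))"
    unfolding swap_expectation_def by (intro sum.cong refl) (simp add: ac_simps)
  also have "\<dots> = complex_of_real ((\<Sum>x\<in>qbasis C. (cmod (a x))\<^sup>2) * (\<Sum>y\<in>qbasis C. (cmod (a y))\<^sup>2))"
    by (simp add: sum_product[symmetric] cnj_mult_self)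
  also have "\<dots> = 1"
    using assms(1) by (simp add: unit_state_def)
  finally show ?thesis
    by (simp add: swap_expectation_eq_purity)
qed

lemma swap_expectation_qtensor:
  assumes "D \<subseteq> C"
  shows "swap_expectation C S (qtensor D (C - D) a b) = swap_expectation D S a * swap_expectation (C - D) S b"
proof -
  have "restrict (override_on r s D) D = s" "restrict (override_on r s D) (C - D) = r"
    if "s \<in> qbasis D" "r \<in> qbasis (C - D)" for s r
    using that by (simp_all add: restrict_override_on_same restrict_override_on_disjoint restrict_qbasis Int_Diff)
  then have "swap_expectation C S (qtensor D (C - D) a b)
      = (\<Sum>s\<in>qbasis D. \<Sum>r\<in>qbasis (C - D). \<Sum>s'\<in>qbasis D. \<Sum>r'\<in>qbasis (C - D).
           (cnj (a s) * cnj (a s') * a (override_on s s' S) * a (override_on s' s S))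
         * (cnj (b r) * cnj (b r') * b (override_on r r' S) * b (override_on r' r S)))"
    unfolding swap_expectation_def sum_qbasis_split[OF assms] qtensor_def restrict_override_on
    by (intro sum.cong refl) (simp add: override_on_in_qbasis ac_simps)
  also have "\<dots> = swap_expectation D S a * swap_expectation (C - D) S b"
    by (simp only: swap_expectation_def sum_product)
  finally show ?thesis .
qed

lemma purity_qtensor:
  assumes "D \<subseteq> C"
  shows "purity C (C \<inter> S) (qtensor D (C - D) a b) = purity D (D \<inter> S) a * purity (C - D) ((C - D) \<inter> S) b"
  using swap_expectation_qtensor[OF assms, of S a b]
  by (simp add: swap_expectation_eq_purity flip: of_real_mult)

lemma purity_le_one:
  assumes "finite C" "D \<subseteq> C" "unit_state C a"
  shows "purity C D a \<le> 1"
  unfolding purity_def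
proof (rule purity_le_overlap_bound)
  show "finite (qbasis D)" "finite (qbasis (C - D))"
    using assms(1,2) by (auto intro: finite_qbasis finite_subset)
  show unit: "(\<Sum>s\<in>qbasis D. \<Sum>r\<in>qbasis (C - D). (cmod (a (override_on r s D)))\<^sup>2) = 1"
    using assms(2,3) by (rule unit_state_split)
  fix u v :: "(nat \<Rightarrow> bool) \<Rightarrow> complex"
  show "(cmod (\<Sum>s\<in>qbasis D. \<Sum>r\<in>qbasis (C - D). cnj (a (override_on r s D)) * u s * v r))\<^sup>2
      \<le> 1 * (\<Sum>s\<in>qbasis D. (cmod (u s))\<^sup>2) * (\<Sum>r\<in>qbasis (C - D). (cmod (v r))\<^sup>2)"
    using Cauchy_Schwarz_complex_double_sum[where f = "\<lambda>s r. cnj (a (override_on r s D))"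
        and g = "\<lambda>s r. u s * v r" and I = "qbasis D" and J = "qbasis (C - D)"]
    by (simp add: unit mult.assoc norm_mult power_mult_distrib sum_product)
qed

lemma far_from_mp_product_overlap:
  assumes "finite C" "far_from_mp C eps a" "D \<noteq> {}" "D \<subset> C"
  shows "(cmod (\<Sum>s\<in>qbasis D. \<Sum>r\<in>qbasis (C - D). cnj (a (override_on r s D)) * u s * v r))\<^sup>2
    \<le> (1 - eps\<^sup>2) * (\<Sum>s\<in>qbasis D. (cmod (u s))\<^sup>2) * (\<Sum>r\<in>qbasis (C - D). (cmod (v r))\<^sup>2)"
    (is "(cmod ?overlap)\<^sup>2 \<le> (1 - eps\<^sup>2) * ?U * ?V")
proof (cases "?U = 0 \<or> ?V = 0")
  case True
  have "finite (qbasis D)" "finite (qbasis (C - D))"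
    using assms(1,4) by (auto intro: finite_qbasis finite_subset)
  then have "(\<forall>s\<in>qbasis D. u s = 0) \<or> (\<forall>r\<in>qbasis (C - D). v r = 0)"
    using True by (simp add: sum_nonneg_eq_0_iff)
  then have "?overlap = 0"
    by auto
  then show ?thesis
    using True by auto
next
  case False
  moreover have "0 \<le> ?U" "0 \<le> ?V"
    by (simp_all add: sum_nonneg)
  ultimately have "0 < ?U" "0 < ?V"
    by auto
  define u' where "u' s = u s / complex_of_real (sqrt ?U)" for s
  define v' where "v' r = v r / complex_of_real (sqrt ?V)" for r
  have "unit_state D u'" "unit_state (C - D) v'"
    unfolding u'_def v'_def using \<open>0 < ?U\<close> \<open>0 < ?V\<close> by (simp_all add: unit_state_normalize)
  then have "mp_product C (qtensor D (C - D) u' v')"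
    unfolding mp_product_def using assms(3,4) unit_state_qtensor[of D C u' v'] by blast
  then have "(cmod (qinner C a (qtensor D (C - D) u' v')))\<^sup>2 \<le> 1 - eps\<^sup>2"
    using assms(2) unfolding far_from_mp_def by blast
  moreover have "qinner C a (qtensor D (C - D) u' v') = ?overlap / complex_of_real (sqrt ?U * sqrt ?V)"
    unfolding qinner_def sum_qbasis_split[OF psubset_imp_subset[OF assms(4)]] qtensor_def sum_divide_distrib
    by (intro sum.cong refl) (simp add: restrict_override_on_same restrict_override_on_disjoint
        restrict_qbasis Int_Diff u'_def v'_def)
  ultimately have "(cmod ?overlap)\<^sup>2 / (?U * ?V) \<le> 1 - eps\<^sup>2"
    using \<open>0 < ?U\<close> \<open>0 < ?V\<close> by (simp add: norm_divide power_divide real_sqrt_mult[symmetric])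
  then show ?thesis
    using \<open>0 < ?U\<close> \<open>0 < ?V\<close> by (simp add: divide_le_eq mult.assoc)
qed

lemma purity_le_of_far_from_mp:
  assumes "finite C" "unit_state C a" "far_from_mp C eps a" "D \<noteq> {}" "D \<subset> C"
  shows "purity C D a \<le> 1 - eps\<^sup>2"
  unfolding purity_def
proof (rule purity_le_overlap_bound)
  show "finite (qbasis D)" "finite (qbasis (C - D))"
    using assms(1,5) by (auto intro: finite_qbasis finite_subset)
  show "(\<Sum>s\<in>qbasis D. \<Sum>r\<in>qbasis (C - D). (cmod (a (override_on r s D)))\<^sup>2) = 1"
    using psubset_imp_subset[OF assms(5)] assms(2) by (rule unit_state_split)
qed (rule far_from_mp_product_overlap[OF assms(1,3-5)])

lemma purity_qtensor_eq_one:
  assumes "C \<subseteq> Q" "unit_state C a" "unit_state (Q - C) b" "Q \<inter> S = C \<or> Q \<inter> S = Q - C"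
  shows "purity Q (Q \<inter> S) (qtensor C (Q - C) a b) = 1"
proof -
  have "C \<inter> S = {} \<or> C \<subseteq> S" "(Q - C) \<inter> S = {} \<or> Q - C \<subseteq> S"
    using assms(1,4) by blast+
  then show ?thesis
    using purity_trivial_cut[OF assms(2)] purity_trivial_cut[OF assms(3)] by (simp add: purity_qtensor[OF assms(1)])
qed

lemma purity_qtensor_le_of_far_from_mp:
  assumes "finite Q" "C \<subseteq> Q" and a: "unit_state C a" "far_from_mp C eps a"
    and b: "unit_state (Q - C) b" "far_from_mp (Q - C) eps b"
    and "Q \<inter> S \<notin> {{}, C, Q - C, Q}"
  shows "purity Q (Q \<inter> S) (qtensor C (Q - C) a b) \<le> 1 - eps\<^sup>2"
proof -
  let ?pa = "purity C (C \<inter> S) a" and ?pb = "purity (Q - C) ((Q - C) \<inter> S) b"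
  have "finite C" "finite (Q - C)"
    using assms(1,2) finite_subset by auto
  have "(C \<inter> S \<noteq> {} \<and> C \<inter> S \<subset> C) \<or> ((Q - C) \<inter> S \<noteq> {} \<and> (Q - C) \<inter> S \<subset> Q - C)"
    using assms(2,7) by blast
  then have "?pa \<le> 1 - eps\<^sup>2 \<or> ?pb \<le> 1 - eps\<^sup>2"
  proof (elim disjE conjE)
    assume "C \<inter> S \<noteq> {}" "C \<inter> S \<subset> C"
    then show ?thesis
      using purity_le_of_far_from_mp[OF \<open>finite C\<close> a] by simp
  next
    assume "(Q - C) \<inter> S \<noteq> {}" "(Q - C) \<inter> S \<subset> Q - C"
    then show ?thesis
      using purity_le_of_far_from_mp[OF \<open>finite (Q - C)\<close> b] by simp
  qed
  moreover have "?pa * ?pb \<le> ?pa" "?pa * ?pb \<le> ?pb"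
    using purity_nonneg purity_le_one[OF \<open>finite C\<close> _ a(1)] purity_le_one[OF \<open>finite (Q - C)\<close> _ b(1)]
    by (simp_all add: mult_left_le mult_left_le_one_le)
  ultimately show ?thesis
    unfolding purity_qtensor[OF assms(2)] by linarith
qed

section \<open>The swap test on pairs of copies\<close>

definition copy_partner :: "nat \<Rightarrow> nat" where
  "copy_partner c = (if even c then Suc c else c - 1)"

(* Copies 2i and 2i+1 form the i-th pair; the qubits in S are exchanged within every pair i in T. *)
definition swap_pairs :: "nat \<Rightarrow> nat set \<Rightarrow> nat set \<Rightarrow> (nat \<Rightarrow> nat \<Rightarrow> bool) \<Rightarrow> (nat \<Rightarrow> nat \<Rightarrow> bool)" where
  "swap_pairs m S T X =
     (\<lambda>c. if c < 2 * m \<and> c div 2 \<in> T then override_on (X c) (X (copy_partner c)) S else X c)"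

(* The product over the pairs i < m of (1 + SWAP_S on pair i)/2, expanded over subsets T of pairs. *)
definition swap_test :: "nat \<Rightarrow> nat set \<Rightarrow> (nat \<Rightarrow> nat \<Rightarrow> bool) \<Rightarrow> (nat \<Rightarrow> nat \<Rightarrow> bool) \<Rightarrow> complex" where
  "swap_test m S X Y = (\<Sum>T\<in>Pow {..<m}. if Y = swap_pairs m S T X then 1 else 0) / 2 ^ m"

lemma override_on_swap_back: "override_on (override_on u w S) (override_on w u S) S = u"
  by (simp add: override_on_def fun_eq_iff)

lemma swap_pairs_swap_pairs: "swap_pairs m S U (swap_pairs m S T X) = swap_pairs m S (sym_diff U T) X"
proof
  fix c
  have "copy_partner c div 2 = c div 2" "copy_partner (copy_partner c) = c"
    "c < 2 * m \<Longrightarrow> copy_partner c < 2 * m"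
    unfolding copy_partner_def by auto presburger
  then show "swap_pairs m S U (swap_pairs m S T X) c = swap_pairs m S (sym_diff U T) X c"
    unfolding swap_pairs_def by (auto simp: override_on_swap_back)
qed

lemma swap_pairs_empty [simp]: "swap_pairs m S {} X = X"
  by (simp add: swap_pairs_def)

lemma swap_pairs_in_copies_basis:
  "X \<in> copies_basis (2 * m) Q \<Longrightarrow> swap_pairs m S T X \<in> copies_basis (2 * m) Q"
  unfolding copies_basis_def swap_pairs_def copy_partner_def
  by (auto simp: PiE_iff extensional_def intro!: override_on_in_qbasis)

lemma finite_copies_basis: "finite Q \<Longrightarrow> finite (copies_basis k Q)"
  unfolding copies_basis_def by (intro finite_PiE) (auto simp: finite_qbasis)

lemma sum_Pow_sym_diff:
  assumes "T \<subseteq> A"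
  shows "(\<Sum>U\<in>Pow A. g (sym_diff U T)) = (\<Sum>V\<in>Pow A. g V)"
proof -
  have "bij_betw (\<lambda>U. sym_diff U T) (Pow A) (Pow A)"
    by (rule bij_betw_byWitness[where f' = "\<lambda>U. sym_diff U T"]) (use assms in auto)
  then show ?thesis
    by (rule sum.reindex_bij_betw)
qed

lemma swap_test_apply:
  assumes "finite Q" "X \<in> copies_basis (2 * m) Q"
  shows "(\<Sum>Y\<in>copies_basis (2 * m) Q. swap_test m S X Y * f Y)
    = (\<Sum>T\<in>Pow {..<m}. f (swap_pairs m S T X)) / 2 ^ m"
proof -
  have "swap_test m S X Y * f Y = (\<Sum>T\<in>Pow {..<m}. if Y = swap_pairs m S T X then f Y else 0) / 2 ^ m"
    for Y
    unfolding swap_test_def sum_divide_distrib sum_distrib_right by (intro sum.cong refl) auto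
  then have "(\<Sum>Y\<in>copies_basis (2 * m) Q. swap_test m S X Y * f Y)
      = (\<Sum>T\<in>Pow {..<m}. \<Sum>Y\<in>copies_basis (2 * m) Q. if Y = swap_pairs m S T X then f Y else 0) / 2 ^ m"
    by (simp add: sum_divide_distrib[symmetric]) (rule sum.swap)
  also have "\<dots> = (\<Sum>T\<in>Pow {..<m}. f (swap_pairs m S T X)) / 2 ^ m"
    using assms by (simp add: sum.delta' finite_copies_basis swap_pairs_in_copies_basis)
  finally show ?thesis .
qed

lemma projector_swap_test:
  assumes "finite Q"
  shows "projector (copies_basis (2 * m) Q) (swap_test m S)"
  unfolding projector_def
proof (intro conjI ballI)
  fix X Y
  have "Y = swap_pairs m S T X \<longleftrightarrow> X = swap_pairs m S T Y" for T
    by (metis Diff_cancel Un_empty swap_pairs_empty swap_pairs_swap_pairs)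
  then show "swap_test m S X Y = cnj (swap_test m S Y X)"
    unfolding swap_test_def by (simp add: cnj_sum if_distrib cong: if_cong)
next
  fix X Z
  assume "X \<in> copies_basis (2 * m) Q"
  have "swap_test m S (swap_pairs m S T X) Z = swap_test m S X Z" if "T \<subseteq> {..<m}" for T
    unfolding swap_test_def swap_pairs_swap_pairs
    using sum_Pow_sym_diff[OF that, of "\<lambda>V. if Z = swap_pairs m S V X then 1 else 0"] by simp
  then show "(\<Sum>Y\<in>copies_basis (2 * m) Q. swap_test m S X Y * swap_test m S Y Z) = swap_test m S X Z"
    using assms \<open>X \<in> copies_basis (2 * m) Q\<close> by (simp add: swap_test_apply card_Pow)
qed

lemma prod_lessThan_double:
  fixes h :: "nat \<Rightarrow> 'a::comm_monoid_mult"
  shows "(\<Prod>c<2 * m. h c) = (\<Prod>i<m. h (2 * i) * h (2 * i + 1))"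
proof (induction m)
  case (Suc m)
  have "{..<2 * Suc m} = insert (2 * m + 1) (insert (2 * m) {..<2 * m})"
    by auto
  then show ?case
    using Suc by (simp add: ac_simps)
qed simp

definition pair_copies :: "nat \<Rightarrow> (nat \<Rightarrow> 'a) \<Rightarrow> nat \<Rightarrow> 'a \<times> 'a" where
  "pair_copies m X = (\<lambda>i\<in>{..<m}. (X (2 * i), X (2 * i + 1)))"

definition unpair_copies :: "nat \<Rightarrow> (nat \<Rightarrow> 'a \<times> 'a) \<Rightarrow> nat \<Rightarrow> 'a" where
  "unpair_copies m Z = (\<lambda>c\<in>{..<2 * m}. (if even c then fst else snd) (Z (c div 2)))"

lemma unpair_pair_copies:
  assumes "X \<in> PiE {..<2 * m} (\<lambda>_. B)"
  shows "unpair_copies m (pair_copies m X) = X"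
proof
  fix c
  show "unpair_copies m (pair_copies m X) c = X c"
  proof (cases "c < 2 * m")
    case True
    then have "c div 2 < m"
      by simp
    show ?thesis
    proof (cases "even c")
      case True
      then have "unpair_copies m (pair_copies m X) c = X (2 * (c div 2))"
        using \<open>c < 2 * m\<close> \<open>c div 2 < m\<close> by (simp add: unpair_copies_def pair_copies_def)
      with \<open>even c\<close> show ?thesis
        by (simp add: even_two_times_div_two)
    next
      case False
      then have "unpair_copies m (pair_copies m X) c = X (2 * (c div 2) + 1)"
        using \<open>c < 2 * m\<close> \<open>c div 2 < m\<close>
        by (simp add: unpair_copies_def pair_copies_def del: odd_two_times_div_two_nat)
      with \<open>odd c\<close> show ?thesis
        by (simp only: odd_two_times_div_two_succ[OF \<open>odd c\<close>])
    qed
  qed (simp add: unpair_copies_def PiE_arb[OF assms])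
qed

lemma pair_unpair_copies:
  assumes "Z \<in> PiE {..<m} (\<lambda>_. B \<times> B)"
  shows "pair_copies m (unpair_copies m Z) = Z"
proof
  fix i
  show "pair_copies m (unpair_copies m Z) i = Z i"
    by (cases "i < m") (simp_all add: pair_copies_def unpair_copies_def PiE_arb[OF assms])
qed

lemma bij_betw_pair_copies:
  "bij_betw (pair_copies m) (PiE {..<2 * m} (\<lambda>_. B)) (PiE {..<m} (\<lambda>_. B \<times> B))"
proof (rule bij_betw_byWitness[where f' = "unpair_copies m"])
  show "pair_copies m ` PiE {..<2 * m} (\<lambda>_. B) \<subseteq> PiE {..<m} (\<lambda>_. B \<times> B)"
    unfolding pair_copies_def by (auto simp: PiE_def Pi_def)
  show "unpair_copies m ` PiE {..<m} (\<lambda>_. B \<times> B) \<subseteq> PiE {..<2 * m} (\<lambda>_. B)"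
  proof
    fix X assume "X \<in> unpair_copies m ` PiE {..<m} (\<lambda>_. B \<times> B)"
    then obtain Z where Z: "Z \<in> PiE {..<m} (\<lambda>_. B \<times> B)" and "X = unpair_copies m Z"
      by auto
    have "Z (c div 2) \<in> B \<times> B" if "c < 2 * m" for c
      using Z that by (auto simp: PiE_def Pi_def)
    then show "X \<in> PiE {..<2 * m} (\<lambda>_. B)"
      unfolding \<open>X = unpair_copies m Z\<close> unpair_copies_def by (auto simp: PiE_def Pi_def mem_Times_iff)
  qed
qed (simp_all add: unpair_pair_copies pair_unpair_copies)

lemma sum_PiE_pairs:
  fixes f :: "nat \<Rightarrow> 'a \<Rightarrow> 'a \<Rightarrow> 'b::comm_semiring_1"
  assumes "finite B"
  shows "(\<Sum>X\<in>PiE {..<2 * m} (\<lambda>_. B). \<Prod>i<m. f i (X (2 * i)) (X (2 * i + 1)))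
    = (\<Prod>i<m. \<Sum>x\<in>B. \<Sum>y\<in>B. f i x y)"
proof -
  have "(\<Prod>i<m. \<Sum>x\<in>B. \<Sum>y\<in>B. f i x y) = (\<Prod>i<m. \<Sum>z\<in>B \<times> B. f i (fst z) (snd z))"
    by (simp add: sum.cartesian_product split_def)
  also have "\<dots> = (\<Sum>Z\<in>PiE {..<m} (\<lambda>_. B \<times> B). \<Prod>i<m. f i (fst (Z i)) (snd (Z i)))"
    by (rule prod_sum_PiE) (use assms in auto)
  also have "\<dots> = (\<Sum>X\<in>PiE {..<2 * m} (\<lambda>_. B). \<Prod>i<m. f i (fst (pair_copies m X i)) (snd (pair_copies m X i)))"
    using bij_betw_pair_copies by (rule sum.reindex_bij_betw[symmetric])
  also have "\<dots> = (\<Sum>X\<in>PiE {..<2 * m} (\<lambda>_. B). \<Prod>i<m. f i (X (2 * i)) (X (2 * i + 1)))"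
    by (intro sum.cong prod.cong refl) (simp add: pair_copies_def)
  finally show ?thesis
    by (rule sym)
qed

lemma swap_expectation_empty: "unit_state Q \<psi> \<Longrightarrow> swap_expectation Q {} \<psi> = 1"
  using purity_trivial_cut[of Q \<psi> "{}"] by (simp add: swap_expectation_eq_purity)

lemma swap_pairs_pair:
  assumes "i < m"
  shows "swap_pairs m S T X (2 * i) = override_on (X (2 * i)) (X (2 * i + 1)) (if i \<in> T then S else {})"
    and "swap_pairs m S T X (2 * i + 1) = override_on (X (2 * i + 1)) (X (2 * i)) (if i \<in> T then S else {})"
  using assms by (simp_all add: swap_pairs_def copy_partner_def)

lemma tensor_power_swap_pairs_overlap:
  assumes "finite Q" "unit_state Q \<psi>" "T \<subseteq> {..<m}"
  shows "(\<Sum>X\<in>copies_basis (2 * m) Q. cnj (tensor_power (2 * m) \<psi> X) * tensor_power (2 * m) \<psi> (swap_pairs m S T X))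
    = swap_expectation Q S \<psi> ^ card T"
proof -
  define g where "g i x y = cnj (\<psi> x) * cnj (\<psi> y)
    * \<psi> (override_on x y (if i \<in> T then S else {})) * \<psi> (override_on y x (if i \<in> T then S else {}))"
    for i x y
  have "cnj (tensor_power (2 * m) \<psi> X) * tensor_power (2 * m) \<psi> (swap_pairs m S T X)
      = (\<Prod>i<m. g i (X (2 * i)) (X (2 * i + 1)))" for X
    unfolding tensor_power_def cnj_prod prod.distrib[symmetric] prod_lessThan_double
    by (intro prod.cong refl) (simp only: swap_pairs_pair lessThan_iff, simp add: g_def ac_simps)
  then have "(\<Sum>X\<in>copies_basis (2 * m) Q. cnj (tensor_power (2 * m) \<psi> X) * tensor_power (2 * m) \<psi> (swap_pairs m S T X))
      = (\<Prod>i<m. \<Sum>x\<in>qbasis Q. \<Sum>y\<in>qbasis Q. g i x y)"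
    unfolding copies_basis_def
    using sum_PiE_pairs[OF finite_qbasis[OF assms(1)], where f = g and m = m] by simp
  also have "\<dots> = (\<Prod>i<m. if i \<in> T then swap_expectation Q S \<psi> else 1)"
    using swap_expectation_empty[OF assms(2)]
    by (intro prod.cong refl) (simp add: g_def swap_expectation_def)
  also have "\<dots> = swap_expectation Q S \<psi> ^ card T"
    using assms(3) by (simp add: prod.If_cases Int_absorb2 Int_commute)
  finally show ?thesis .
qed

lemma outcome_prob_swap_test:
  assumes "finite Q" "unit_state Q \<psi>"
  shows "outcome_prob (copies_basis (2 * m) Q) (swap_test m S) (tensor_power (2 * m) \<psi>)
    = ((1 + purity Q (Q \<inter> S) \<psi>) / 2) ^ m"
proof -
  let ?K = "copies_basis (2 * m) Q" and ?\<Psi> = "tensor_power (2 * m) \<psi>"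
  let ?q = "swap_expectation Q S \<psi>"
  have "(\<Sum>Y\<in>?K. cnj (?\<Psi> X) * swap_test m S X Y * ?\<Psi> Y)
      = (\<Sum>T\<in>Pow {..<m}. cnj (?\<Psi> X) * ?\<Psi> (swap_pairs m S T X)) / 2 ^ m" if "X \<in> ?K" for X
  proof -
    have "(\<Sum>Y\<in>?K. cnj (?\<Psi> X) * swap_test m S X Y * ?\<Psi> Y)
        = cnj (?\<Psi> X) * (\<Sum>Y\<in>?K. swap_test m S X Y * ?\<Psi> Y)"
      by (simp add: sum_distrib_left mult.assoc)
    also have "\<dots> = cnj (?\<Psi> X) * (\<Sum>T\<in>Pow {..<m}. ?\<Psi> (swap_pairs m S T X)) / 2 ^ m"
      by (simp add: swap_test_apply[OF assms(1) that])
    finally show ?thesis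
      by (simp add: sum_distrib_left)
  qed
  then have "(\<Sum>X\<in>?K. \<Sum>Y\<in>?K. cnj (?\<Psi> X) * swap_test m S X Y * ?\<Psi> Y)
      = (\<Sum>X\<in>?K. \<Sum>T\<in>Pow {..<m}. cnj (?\<Psi> X) * ?\<Psi> (swap_pairs m S T X)) / 2 ^ m"
    by (simp add: sum_divide_distrib)
  also have "\<dots> = (\<Sum>T\<in>Pow {..<m}. ?q ^ card T) / 2 ^ m"
    using assms by (subst sum.swap) (simp add: tensor_power_swap_pairs_overlap)
  also have "\<dots> = ((1 + ?q) / 2) ^ m"
    using prod_add[of "{..<m}" "\<lambda>_. ?q" "\<lambda>_. 1"] by (simp add: add.commute power_divide)
  finally show ?thesis
    unfolding outcome_prob_def swap_expectation_eq_purity by (simp flip: of_real_power)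
qed

lemma power_half_one_plus_le_exp:
  fixes x e :: real
  assumes "0 \<le> x" "x \<le> 1 - e\<^sup>2"
  shows "((1 + x) / 2) ^ m \<le> exp (- (e\<^sup>2 * real m / 2))"
proof -
  have "(1 + x) / 2 \<le> 1 + (- (e\<^sup>2 / 2))"
    using assms(2) by simp
  also have "\<dots> \<le> exp (- (e\<^sup>2 / 2))"
    by (rule exp_ge_add_one_self)
  finally have "((1 + x) / 2) ^ m \<le> exp (- (e\<^sup>2 / 2)) ^ m"
    using assms(1) by (intro power_mono) auto
  also have "\<dots> = exp (- (e\<^sup>2 * real m / 2))"
    by (simp add: exp_of_nat_mult[symmetric] algebra_simps)
  finally show ?thesis .
qed

theorem proposition2p19:
  fixes n m :: nat and S :: "nat set"
  assumes "m > 0" and "S \<noteq> {}" and "S \<subset> {1..n}"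
  shows "\<exists>P. projector (copies_basis (2*m) {1..n}) P \<and>
    (\<forall>C a b (eps::real).
       C \<noteq> {} \<and> C \<subset> {1..n} \<and>
       unit_state C a \<and> unit_state ({1..n} - C) b \<and>
       far_from_mp C eps a \<and> far_from_mp ({1..n} - C) eps b \<longrightarrow>
       (let psi = qtensor C ({1..n} - C) a b;
            p = outcome_prob (copies_basis (2*m) {1..n}) P (tensor_power (2*m) psi)
        in (S = C \<or> S = {1..n} - C \<longrightarrow> p = 1) \<and>
           (S \<noteq> C \<and> S \<noteq> {1..n} - C \<longrightarrow> p \<le> exp (- (eps\<^sup>2 * real m / 2)))))"
proof (intro exI conjI allI impI)
  let ?Q = "{1..n}"
  show "projector (copies_basis (2 * m) ?Q) (swap_test m S)"
    by (rule projector_swap_test) simp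
  fix C a b and eps :: real
  assume "C \<noteq> {} \<and> C \<subset> ?Q \<and> unit_state C a \<and> unit_state (?Q - C) b \<and>
    far_from_mp C eps a \<and> far_from_mp (?Q - C) eps b"
  then have C: "C \<subseteq> ?Q" and a: "unit_state C a" "far_from_mp C eps a"
    and b: "unit_state (?Q - C) b" "far_from_mp (?Q - C) eps b"
    by auto
  let ?\<psi> = "qtensor C (?Q - C) a b"
  have "?Q \<inter> S = S"
    using assms(3) by blast
  then have accept: "outcome_prob (copies_basis (2 * m) ?Q) (swap_test m S) (tensor_power (2 * m) ?\<psi>)
      = ((1 + purity ?Q (?Q \<inter> S) ?\<psi>) / 2) ^ m"
    using outcome_prob_swap_test[OF _ unit_state_qtensor[OF C a(1) b(1)]] by simp
  show "let psi = ?\<psi>; p = outcome_prob (copies_basis (2 * m) ?Q) (swap_test m S) (tensor_power (2 * m) psi)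
    in (S = C \<or> S = ?Q - C \<longrightarrow> p = 1) \<and> (S \<noteq> C \<and> S \<noteq> ?Q - C \<longrightarrow> p \<le> exp (- (eps\<^sup>2 * real m / 2)))"
    unfolding Let_def accept
  proof (intro conjI impI)
    assume "S = C \<or> S = ?Q - C"
    then show "((1 + purity ?Q (?Q \<inter> S) ?\<psi>) / 2) ^ m = 1"
      using purity_qtensor_eq_one[OF C a(1) b(1), of S] \<open>?Q \<inter> S = S\<close> by simp
  next
    assume "S \<noteq> C \<and> S \<noteq> ?Q - C"
    then have "?Q \<inter> S \<notin> {{}, C, ?Q - C, ?Q}"
      using assms(2,3) \<open>?Q \<inter> S = S\<close> by auto
    then show "((1 + purity ?Q (?Q \<inter> S) ?\<psi>) / 2) ^ m \<le> exp (- (eps\<^sup>2 * real m / 2))"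
      by (intro power_half_one_plus_le_exp purity_nonneg purity_qtensor_le_of_far_from_mp[OF _ C a b]) simp_all
  qed
qed

end
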